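(* Let $f:\mathbb{N}\to\mathbb{N}_{\ge 1}$ be an arithmetic function such that $f(n)=o(\log\log n)$ as $n\to\infty$. Then for Lebesgue-almost every irrational $\alpha\in(0,1)$, \[ \lim_{n\to\infty} S(\alpha,n,f(n))^{1/f(n)} = \infty. \]
   Context: Every irrational $\alpha\in(0,1)$ has a unique continued fraction expansion $\alpha = 1/(a_1(\alpha)+1/(a_2(\alpha)+\cdots))$ with digits $a_i(\alpha)\in\mathbb{N}_{\ge1}$. For $1\le k\le n$ integers, the $k$-th elementary symmetric mean of the first $n$ digits is \[ S(\alpha,n,k) := \binom{n}{k}^{-1}\sum_{1\le i_1<\cdots<i_k\le n} a_{i_1}(\alpha)\cdots a_{i_k}(\alpha). \] Convention: if $k=k(n)$ is not an integer, $S(\alpha,n,k)^{1/k}$ means $S(\alpha,n,\lceil k\rceil)^{1/\lceil k\rceil}$. *)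

theory Defs
  imports "HOL-Analysis.Analysis" "HOL-Library.Landau_Symbols"
begin

definition gauss_map :: "real \<Rightarrow> real" where
  "gauss_map x = frac (1 / x)"

text \<open>Continued fraction digit a_i(x), i >= 1: a_i(x) = floor(1 / T^(i-1)(x)).
  For irrational x in (0,1) these are exactly the digits of
  x = 1/(a_1 + 1/(a_2 + ...)).\<close>
definition cf_digit :: "real \<Rightarrow> nat \<Rightarrow> nat" where
  "cf_digit x i = nat \<lfloor>1 / (gauss_map ^^ (i - 1)) x\<rfloor>"

definition sym_mean :: "real \<Rightarrow> nat \<Rightarrow> nat \<Rightarrow> real" where
  "sym_mean x n k =
     (\<Sum>I\<in>{I. I \<subseteq> {1..n} \<and> card I = k}. \<Prod>i\<in>I. real (cf_digit x i)) / real (n choose k)"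

end

theory Submission
  imports Defs "HOL-Library.Log_Nat" "HOL-Library.Discrete_Functions"
begin

text \<open>
  Let \<open>\<rho>(x) = 1/(1+x)\<close> be the unnormalised Gauss density. Pulling \<open>\<rho>\<close> back along the
  inverse branches \<open>z \<mapsto> 1/(k+z)\<close> of the Gauss map shows that the \<open>\<rho>\<close>-integral of
  \<open>\<Prod>i. U i (a_i x)\<close> is at most \<open>\<Prod>i. c i\<close> as soon as each weight \<open>U i\<close> averages to at most
  \<open>c i\<close> against the branch weights. Halving the weight of the digits \<open>\<ge> M\<close> among \<open>L\<close> given
  positions turns this into a Chernoff bound: fewer than \<open>m\<close> of these digits are \<open>\<ge> M\<close> with
  probability at most \<open>2^(m+1) exp (-L/(2M))\<close>.

  For \<open>2^j \<le> n < 2^(j+1)\<close> and every \<open>r < j/8\<close>, cut \<open>[1, 2^j]\<close> into \<open>2^r\<close> blocks of length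
  \<open>2^(j-r)\<close> and ask each block to contain at least \<open>2^(j-r-s-3)\<close> digits \<open>\<ge> 2^s\<close>, for every
  \<open>1 \<le> s \<le> j/8\<close>. The failure probabilities are summable in \<open>j\<close>, so by Borel-Cantelli almost
  every \<open>\<alpha>\<close> eventually passes all tests, and then every block has digit sum at least
  \<open>(j/8) 2^(j-r-4)\<close>. Choosing \<open>k\<close> disjoint blocks with \<open>k \<le> 2^r < 2k\<close> and keeping only the
  products of one digit from each block gives \<open>S(\<alpha>,n,k)^(1/k) \<ge> (j/8)/192\<close>, valid as long as
  \<open>2k < 2^(j/8)\<close>, which \<open>k \<le> ln (ln n)\<close> guarantees.
\<close>

section \<open>The Gauss map and the digits\<close>

lemma borel_measurable_frac [measurable]: "(frac :: real \<Rightarrow> real) \<in> borel_measurable borel"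
proof -
  have "frac = (\<lambda>x::real. x - real_of_int \<lfloor>x\<rfloor>)" by (auto simp: frac_def)
  also have "\<dots> \<in> borel_measurable borel" by measurable
  finally show ?thesis .
qed

lemma borel_measurable_gauss_map [measurable]: "gauss_map \<in> borel_measurable borel"
  unfolding gauss_map_def by measurable

lemma borel_measurable_gauss_map_funpow [measurable]: "(gauss_map ^^ i) \<in> borel_measurable borel"
  by (induction i) (auto intro: measurable_compose)

lemma borel_measurable_cf_digit [measurable]: "(\<lambda>x. real (cf_digit x i)) \<in> borel_measurable borel"
proof -
  have "(\<lambda>x. real (cf_digit x i)) = (\<lambda>x. max 0 (real_of_int \<lfloor>1 / (gauss_map ^^ (i - 1)) x\<rfloor>))"
    by (auto simp: cf_digit_def fun_eq_iff)
  also have "\<dots> \<in> borel_measurable borel" by measurable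
  finally show ?thesis .
qed

lemma measurable_cf_digit [measurable]: "(\<lambda>x. cf_digit x i) \<in> borel \<rightarrow>\<^sub>M count_space UNIV"
proof (subst measurable_count_space_eq2_countable, safe)
  fix a :: nat
  have "(\<lambda>x. cf_digit x i) -` {a} \<inter> space borel = {x. real (cf_digit x i) = real a}" by auto
  also have "\<dots> \<in> sets borel" by measurable
  finally show "(\<lambda>x. cf_digit x i) -` {a} \<inter> space borel \<in> sets borel" .
qed auto

lemma cf_digit_Suc: "1 \<le> i \<Longrightarrow> cf_digit x (Suc i) = cf_digit (gauss_map x) i"
  unfolding cf_digit_def by (cases i) (simp_all add: funpow_swap1)

lemma cf_digit_1_bounds:
  assumes "0 < x" "x < 1"
  shows "1 \<le> cf_digit x 1" "1 / (real (cf_digit x 1) + 1) \<le> x" "x \<le> 1 / real (cf_digit x 1)"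
proof -
  define a where "a = \<lfloor>1 / x\<rfloor>"
  have "1 < 1 / x" using assms by simp
  then have a1: "1 \<le> a" by (simp add: a_def le_floor_iff)
  have digit: "real (cf_digit x 1) = of_int a"
    unfolding cf_digit_def using a1 by (simp add: a_def[symmetric])
  have lower: "of_int a \<le> 1 / x" and upper: "1 / x < of_int a + 1"
    unfolding a_def by linarith+
  have "(1::real) \<le> of_int a" using a1 by simp
  then show "1 \<le> cf_digit x 1" using digit by linarith
  show "1 / (real (cf_digit x 1) + 1) \<le> x"
    using upper assms a1 unfolding digit by (simp add: field_simps)
  show "x \<le> 1 / real (cf_digit x 1)"
    using lower assms a1 unfolding digit by (simp add: field_simps)
qed

section \<open>Transfer along the inverse branches of the Gauss map\<close>

definition gauss_density :: "real \<Rightarrow> real" where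
  "gauss_density x = 1 / (1 + x)"

text \<open>\<open>\<rho>(1/t) / t^2\<close>: the Gauss density pulled back along \<open>z \<mapsto> 1/(k + z)\<close>, with \<open>t = k + z\<close>.\<close>
definition gauss_branch_weight :: "real \<Rightarrow> real" where
  "gauss_branch_weight t = 1 / (t * (t + 1))"

lemma borel_measurable_gauss_density [measurable]: "gauss_density \<in> borel_measurable borel"
  unfolding gauss_density_def by measurable

lemma borel_measurable_gauss_branch_weight [measurable]:
  "gauss_branch_weight \<in> borel_measurable borel"
  unfolding gauss_branch_weight_def by measurable

lemma gauss_branch_weight_nonneg: "0 \<le> t \<Longrightarrow> 0 \<le> gauss_branch_weight t"
  unfolding gauss_branch_weight_def by simp

lemma gauss_branch_weight_eq_diff: "0 < t \<Longrightarrow> gauss_branch_weight t = 1 / t - 1 / (t + 1)"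
  unfolding gauss_branch_weight_def by (simp add: field_simps)

lemma gauss_branch_weight_sums:
  assumes "0 < a"
  shows "(\<lambda>k. gauss_branch_weight (real k + a)) sums (1 / a)"
proof -
  define f where "f n = 1 / (real n + a)" for n
  have "f \<longlonglongrightarrow> 0" unfolding f_def by real_asymp
  from telescope_sums'[OF this] have "(\<lambda>n. f n - f (Suc n)) sums (f 0 - 0)" .
  moreover have "f n - f (Suc n) = gauss_branch_weight (real n + a)" for n
    using assms unfolding f_def by (subst gauss_branch_weight_eq_diff) (auto simp: algebra_simps)
  ultimately show ?thesis by (simp add: f_def)
qed

lemma gauss_branch_weight_suminf:
  "0 \<le> z \<Longrightarrow> (\<Sum>k. gauss_branch_weight (real (Suc k) + z)) = gauss_density z"
  using gauss_branch_weight_sums[of "1 + z"]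
  by (simp add: sums_iff gauss_density_def add.commute add.left_commute)

lemma summable_gauss_branch_weight_mult:
  assumes z: "0 \<le> z" and u: "\<And>k. 0 \<le> u k" "\<And>k. u k \<le> 1"
  shows "summable (\<lambda>k. u (Suc k) * gauss_branch_weight (real (Suc k) + z))"
proof (rule summable_comparison_test[rotated])
  show "summable (\<lambda>k. gauss_branch_weight (real (Suc k) + z))"
    using gauss_branch_weight_sums[of "1 + z"] z by (simp add: sums_iff add_ac)
  show "\<exists>N. \<forall>k\<ge>N. norm (u (Suc k) * gauss_branch_weight (real (Suc k) + z))
      \<le> gauss_branch_weight (real (Suc k) + z)"
    using u gauss_branch_weight_nonneg z by (auto intro!: exI[of _ 0] mult_left_le_one_le)
qed

lemma nn_integral_gauss_branch:
  fixes \<phi> :: "real \<Rightarrow> ennreal" and c :: real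
  assumes [measurable]: "\<phi> \<in> borel_measurable borel" and c: "0 \<le> c"
  shows "(\<integral>\<^sup>+x. indicator {1 / (real k + 2)..1 / (real k + 1)} x * ennreal (c * gauss_density x)
            * \<phi> (frac (1/x)) \<partial>lborel)
       = (\<integral>\<^sup>+z. indicator {0..1} z * \<phi> z * ennreal (c * gauss_branch_weight (Suc k + z)) \<partial>lborel)"
proof -
  define g where "g y = 1 / (real k + 2 - y)" for y
  define g' where "g' y = 1 / (real k + 2 - y)^2" for y
  define F where "F x = ennreal (c * gauss_density x) * \<phi> (frac (1/x))" for x
  define H where "H y = indicator {0..1} y * \<phi> (frac (real k + 2 - y))
                          * ennreal (c * gauss_branch_weight (real k + 2 - y))" for y
  have [measurable]: "F \<in> borel_measurable borel" unfolding F_def by measurable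
  have [measurable]: "H \<in> borel_measurable borel" unfolding H_def by measurable
  have ends: "g 0 = 1 / (real k + 2)" "g 1 = 1 / (real k + 1)"
    by (simp_all add: g_def)
  have "(\<integral>\<^sup>+x. F x * indicator {g 0..g 1} x \<partial>lborel)
      = (\<integral>\<^sup>+x. F (g x) * g' x * indicator {0..1} x \<partial>lborel)"
  proof (rule nn_integral_substitution_aux)
    show "\<And>x. x \<in> {0..1} \<Longrightarrow> (g has_real_derivative g' x) (at x)"
      unfolding g_def g'_def
      by (auto intro!: derivative_eq_intros simp: power2_eq_square field_simps)
    show "continuous_on {0..1} g'" unfolding g'_def
      by (intro continuous_intros) auto
    show "\<And>x. x \<in> {0..1} \<Longrightarrow> 0 \<le> g' x" unfolding g'_def by auto
  qed auto
  also have "\<dots> = (\<integral>\<^sup>+y. H y \<partial>lborel)"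
  proof (rule nn_integral_cong)
    fix y :: real
    show "F (g y) * g' y * indicator {0..1} y = H y"
    proof (cases "y \<in> {0..1}")
      case True
      then have pos: "0 < real k + 2 - y" by auto
      have "1 / (1 + 1 / t) * (1 / t^2) = 1 / (t * (t + 1))" if "0 < t" for t :: real
        using that by (simp add: field_simps power2_eq_square)
      then have "gauss_density (g y) * g' y = gauss_branch_weight (real k + 2 - y)"
        using pos unfolding gauss_density_def g_def g'_def gauss_branch_weight_def by blast
      moreover have "0 \<le> gauss_density (g y)" "0 \<le> g' y"
        using pos unfolding gauss_density_def g_def g'_def by auto
      ultimately have weight: "ennreal (c * gauss_density (g y)) * ennreal (g' y)
          = ennreal (c * gauss_branch_weight (real k + 2 - y))"
        using c by (simp add: ennreal_mult[symmetric] mult.assoc)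
      have "1 / g y = real k + 2 - y" by (simp add: g_def)
      then have "F (g y) * g' y * indicator {0..1} y
          = \<phi> (frac (real k + 2 - y)) * (ennreal (c * gauss_density (g y)) * ennreal (g' y))"
        unfolding F_def using True by (simp add: mult_ac)
      then show ?thesis unfolding weight H_def using True by simp
    qed (simp add: H_def)
  qed
  also have "\<dots> = (\<integral>\<^sup>+z. H (1 + (-1) * z) \<partial>lborel)"
    using nn_integral_real_affine[of H "-1" 1] by simp
  also have "\<dots> = (\<integral>\<^sup>+z. indicator {0..1} z * \<phi> z * ennreal (c * gauss_branch_weight (Suc k + z)) \<partial>lborel)"
  proof (rule nn_integral_cong_AE)
    show "AE z in lborel. H (1 + (-1) * z)
        = indicator {0..1} z * \<phi> z * ennreal (c * gauss_branch_weight (Suc k + z))"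
      using AE_lborel_singleton[of 1]
    proof eventually_elim
      case (elim z)
      have eq: "real k + 2 - (1 + (-1) * z) = real (Suc k) + z" by simp
      show ?case
      proof (cases "z \<in> {0..1}")
        case True
        with elim have "frac (real (Suc k) + z) = z" by (simp add: frac_add_int_left)
        then show ?thesis unfolding H_def eq using True by (simp add: indicator_def)
      next
        case False
        then have "1 + (-1) * z \<notin> {0..1}" by auto
        then show ?thesis using False unfolding H_def by simp
      qed
    qed
  qed
  finally show ?thesis unfolding F_def ends by (simp add: mult_ac)
qed

lemma nn_integral_gauss_transfer_le:
  fixes \<phi> :: "real \<Rightarrow> ennreal" and u :: "nat \<Rightarrow> real"
  assumes [measurable]: "\<phi> \<in> borel_measurable borel"
    and u0: "\<And>k. 0 \<le> u k" and u1: "\<And>k. u k \<le> 1"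
  shows "(\<integral>\<^sup>+x. indicator {0<..<1} x * ennreal (gauss_density x * u (cf_digit x 1)) * \<phi> (gauss_map x) \<partial>lborel)
     \<le> (\<integral>\<^sup>+z. indicator {0..1} z * \<phi> z
            * ennreal (\<Sum>k. u (Suc k) * gauss_branch_weight (real (Suc k) + z)) \<partial>lborel)"
proof -
  define T where "T k x = indicator {1 / (real k + 2)..1 / (real k + 1)} x
                     * ennreal (u (Suc k) * gauss_density x) * \<phi> (frac (1/x))" for k x
  have [measurable]: "T k \<in> borel_measurable borel" for k unfolding T_def by measurable
  have "(\<integral>\<^sup>+x. indicator {0<..<1} x * ennreal (gauss_density x * u (cf_digit x 1)) * \<phi> (gauss_map x) \<partial>lborel)
      \<le> (\<integral>\<^sup>+x. (\<Sum>k. T k x) \<partial>lborel)"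
  proof (rule nn_integral_mono)
    fix x :: real
    show "indicator {0<..<1} x * ennreal (gauss_density x * u (cf_digit x 1)) * \<phi> (gauss_map x)
        \<le> (\<Sum>k. T k x)"
    proof (cases "x \<in> {0<..<1}")
      case True
      then have x: "0 < x" "x < 1" by auto
      define k where "k = cf_digit x 1 - 1"
      have k: "Suc k = cf_digit x 1" using cf_digit_1_bounds(1)[OF x] unfolding k_def by simp
      have "real (cf_digit x 1) + 1 = real k + 2" "real (cf_digit x 1) = real k + 1"
        unfolding k[symmetric] by simp_all
      then have "x \<in> {1 / (real k + 2)..1 / (real k + 1)}"
        using cf_digit_1_bounds(2,3)[OF x] by (simp add: add.commute)
      then have "indicator {0<..<1} x * ennreal (gauss_density x * u (cf_digit x 1)) * \<phi> (gauss_map x)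
          = T k x"
        unfolding T_def gauss_map_def using True k by (simp add: mult_ac)
      also have "\<dots> \<le> (\<Sum>k. T k x)"
        using sum_le_suminf[OF summableI, of "{k}" "\<lambda>k. T k x"] by simp
      finally show ?thesis .
    qed simp
  qed
  also have "\<dots> = (\<Sum>k. \<integral>\<^sup>+x. T k x \<partial>lborel)"
    by (rule nn_integral_suminf) measurable
  also have "\<dots> = (\<Sum>k. \<integral>\<^sup>+z. indicator {0..1} z * \<phi> z
                         * ennreal (u (Suc k) * gauss_branch_weight (real (Suc k) + z)) \<partial>lborel)"
    unfolding T_def by (subst nn_integral_gauss_branch) (auto simp: u0)
  also have "\<dots> = (\<integral>\<^sup>+z. (\<Sum>k. indicator {0..1} z * \<phi> z
                         * ennreal (u (Suc k) * gauss_branch_weight (real (Suc k) + z))) \<partial>lborel)"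
    by (rule nn_integral_suminf[symmetric]) measurable
  also have "\<dots> = (\<integral>\<^sup>+z. indicator {0..1} z * \<phi> z
                       * ennreal (\<Sum>k. u (Suc k) * gauss_branch_weight (real (Suc k) + z)) \<partial>lborel)"
  proof (rule nn_integral_cong)
    fix z :: real
    show "(\<Sum>k. indicator {0..1} z * \<phi> z * ennreal (u (Suc k) * gauss_branch_weight (real (Suc k) + z)))
        = indicator {0..1} z * \<phi> z * ennreal (\<Sum>k. u (Suc k) * gauss_branch_weight (real (Suc k) + z))"
    proof (cases "z \<in> {0..1}")
      case True
      then have z: "0 \<le> z" by auto
      have nonneg: "0 \<le> u (Suc k) * gauss_branch_weight (real (Suc k) + z)" for k
        using u0 gauss_branch_weight_nonneg z by simp
      have "summable (\<lambda>k. u (Suc k) * gauss_branch_weight (real (Suc k) + z))"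
        using z u0 u1 by (rule summable_gauss_branch_weight_mult)
      then show ?thesis
        using ennreal_suminf_cmult suminf_ennreal2[OF nonneg] by simp
    qed simp
  qed
  finally show ?thesis .
qed

lemma nn_integral_gauss_density_le_1:
  "(\<integral>\<^sup>+x. indicator {0<..<1} x * ennreal (gauss_density x) \<partial>lborel) \<le> 1"
proof -
  have "(\<integral>\<^sup>+x. indicator {0<..<1} x * ennreal (gauss_density x) \<partial>lborel)
      \<le> (\<integral>\<^sup>+x. indicator {0<..<1::real} x \<partial>lborel)"
    by (intro nn_integral_mono) (auto simp: indicator_def gauss_density_def)
  then show ?thesis by simp
qed

lemma prod_atLeast1_atMost_Suc_shift:
  "(\<Prod>i\<in>{1..Suc N}. h i) = h 1 * (\<Prod>i\<in>{1..N}. h (Suc i))" for h :: "nat \<Rightarrow> 'a::comm_monoid_mult"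
proof -
  have "(\<Prod>i\<in>{1..Suc N}. h i) = (\<Prod>i\<in>{0..N}. h (Suc i))"
    using prod.atLeast_Suc_atMost_Suc_shift[of h 0 N] by simp
  also have "\<dots> = h 1 * (\<Prod>i\<in>{Suc 0..N}. h (Suc i))"
    by (subst prod.atLeast_Suc_atMost) auto
  finally show ?thesis by simp
qed

text \<open>Induction on \<open>N\<close>: the first digit is integrated out by the transfer inequality, the
  product over the remaining digits being a function of \<open>gauss_map x\<close>.\<close>
lemma nn_integral_digit_product_le:
  fixes U :: "nat \<Rightarrow> nat \<Rightarrow> real" and c :: "nat \<Rightarrow> real"
  assumes "\<And>i k. 0 \<le> U i k" "\<And>i k. U i k \<le> 1" "\<And>i. 0 \<le> c i"
    and "\<And>i z. 0 \<le> z \<Longrightarrow> z \<le> 1 \<Longrightarrow>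
           (\<Sum>k. U i (Suc k) * gauss_branch_weight (real (Suc k) + z)) \<le> c i * gauss_density z"
  shows "(\<integral>\<^sup>+x. indicator {0<..<1} x * ennreal (gauss_density x * (\<Prod>i\<in>{1..N}. U i (cf_digit x i))) \<partial>lborel)
       \<le> ennreal (\<Prod>i\<in>{1..N}. c i)"
  using assms
proof (induction N arbitrary: U c)
  case 0
  then show ?case using nn_integral_gauss_density_le_1 by simp
next
  case (Suc N U c)
  define V where "V i = U (Suc i)" for i
  define \<Phi> where "\<Phi> y = ennreal (\<Prod>i\<in>{1..N}. V i (cf_digit y i))" for y
  have [measurable]: "\<Phi> \<in> borel_measurable borel" unfolding \<Phi>_def by measurable
  have V: "0 \<le> V i k" "V i k \<le> 1" for i k using Suc.prems unfolding V_def by auto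
  have tail_nonneg: "0 \<le> (\<Prod>i\<in>{1..N}. V i (cf_digit y i))" for y using V by (simp add: prod_nonneg)
  have split: "indicator {0<..<1} x * ennreal (gauss_density x * (\<Prod>i\<in>{1..Suc N}. U i (cf_digit x i)))
      = indicator {0<..<1} x * ennreal (gauss_density x * U 1 (cf_digit x 1)) * \<Phi> (gauss_map x)" for x
  proof (cases "x \<in> {0<..<1}")
    case True
    then have "0 \<le> gauss_density x" by (simp add: gauss_density_def)
    moreover have "(\<Prod>i\<in>{1..Suc N}. U i (cf_digit x i))
        = U 1 (cf_digit x 1) * (\<Prod>i\<in>{1..N}. V i (cf_digit (gauss_map x) i))"
      unfolding prod_atLeast1_atMost_Suc_shift V_def using cf_digit_Suc by (auto intro!: prod.cong)
    ultimately show ?thesis unfolding \<Phi>_def using Suc.prems(1) tail_nonneg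
      by (simp add: ennreal_mult'' mult.assoc)
  qed simp
  have "(\<integral>\<^sup>+x. indicator {0<..<1} x * ennreal (gauss_density x * (\<Prod>i\<in>{1..Suc N}. U i (cf_digit x i))) \<partial>lborel)
      = (\<integral>\<^sup>+x. indicator {0<..<1} x * ennreal (gauss_density x * U 1 (cf_digit x 1)) * \<Phi> (gauss_map x) \<partial>lborel)"
    by (simp only: split)
  also have "\<dots> \<le> (\<integral>\<^sup>+z. indicator {0..1} z * \<Phi> z
                      * ennreal (\<Sum>k. U 1 (Suc k) * gauss_branch_weight (real (Suc k) + z)) \<partial>lborel)"
    by (rule nn_integral_gauss_transfer_le) (use Suc.prems in auto)
  also have "\<dots> \<le> (\<integral>\<^sup>+z. ennreal (c 1) * (indicator {0<..<1} z
                      * ennreal (gauss_density z * (\<Prod>i\<in>{1..N}. V i (cf_digit z i)))) \<partial>lborel)"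
  proof (rule nn_integral_mono_AE)
    show "AE z in lborel. indicator {0..1} z * \<Phi> z
              * ennreal (\<Sum>k. U 1 (Suc k) * gauss_branch_weight (real (Suc k) + z))
        \<le> ennreal (c 1) * (indicator {0<..<1} z * ennreal (gauss_density z * (\<Prod>i\<in>{1..N}. V i (cf_digit z i))))"
      using AE_lborel_singleton[of 0] AE_lborel_singleton[of 1]
    proof eventually_elim
      case (elim z)
      show ?case
      proof (cases "z \<in> {0<..<1}")
        case True
        then have density: "0 \<le> gauss_density z" by (simp add: gauss_density_def)
        have "ennreal (\<Sum>k. U 1 (Suc k) * gauss_branch_weight (real (Suc k) + z))
            \<le> ennreal (c 1 * gauss_density z)"
          using Suc.prems(4)[of z 1] True by (auto intro: ennreal_leI)
        then have "\<Phi> z * ennreal (\<Sum>k. U 1 (Suc k) * gauss_branch_weight (real (Suc k) + z))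
            \<le> \<Phi> z * ennreal (c 1 * gauss_density z)"
          by (rule mult_left_mono) simp
        also have "\<dots> = ennreal (c 1) * ennreal (gauss_density z * (\<Prod>i\<in>{1..N}. V i (cf_digit z i)))"
          using density tail_nonneg Suc.prems(3)[of 1] unfolding \<Phi>_def
          by (simp add: ennreal_mult'' ennreal_mult mult_ac)
        finally show ?thesis using True by simp
      next
        case False
        with elim have "z \<notin> {0..1}" by auto
        with False show ?thesis by simp
      qed
    qed
  qed
  also have "\<dots> = ennreal (c 1) * (\<integral>\<^sup>+z. indicator {0<..<1} z
                      * ennreal (gauss_density z * (\<Prod>i\<in>{1..N}. V i (cf_digit z i))) \<partial>lborel)"
    by (rule nn_integral_cmult) measurable
  also have "\<dots> \<le> ennreal (c 1) * ennreal (\<Prod>i\<in>{1..N}. c (Suc i))"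
    by (intro mult_left_mono Suc.IH) (use Suc.prems V in \<open>auto simp: V_def\<close>)
  also have "\<dots> = ennreal (\<Prod>i\<in>{1..Suc N}. c i)"
    unfolding prod_atLeast1_atMost_Suc_shift using Suc.prems(3) by (simp add: ennreal_mult prod_nonneg)
  finally show ?case .
qed

section \<open>A Chernoff bound for large digits\<close>

lemma suminf_halve_tail_branch_weight_le:
  assumes M: "1 \<le> M" and z: "0 \<le> z" "z \<le> 1"
  shows "(\<Sum>k. (if M \<le> Suc k then 1/2 else 1) * gauss_branch_weight (real (Suc k) + z))
     \<le> (1 - 1 / (2 * real M)) * gauss_density z"
proof -
  let ?w = "\<lambda>k. gauss_branch_weight (real (Suc k) + z)"
  let ?tail = "\<lambda>k. if M \<le> Suc k then ?w k else 0"
  have "(\<lambda>i. ?tail (i + (M - 1))) sums (1 / (real M + z))"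
    using gauss_branch_weight_sums[of "real M + z"] M z by (simp add: of_nat_diff algebra_simps)
  then have tail: "?tail sums (1 / (real M + z))"
    by (subst (asm) sums_zero_iff_shift) (use M in auto)
  have all: "?w sums (1 / (1 + z))"
    using gauss_branch_weight_sums[of "1 + z"] z by (simp add: add_ac)
  have "(\<lambda>k. ?w k - 1/2 * ?tail k) sums (1 / (1 + z) - 1/2 * (1 / (real M + z)))"
    by (intro sums_diff sums_mult all tail)
  moreover have "(\<lambda>k. ?w k - 1/2 * ?tail k) = (\<lambda>k. (if M \<le> Suc k then 1/2 else 1) * ?w k)"
    by (auto simp: fun_eq_iff)
  ultimately have "(\<Sum>k. (if M \<le> Suc k then 1/2 else 1) * ?w k) = 1 / (1 + z) - 1 / (2 * (real M + z))"
    by (simp add: sums_iff)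
  also have "\<dots> \<le> 1 / (1 + z) - 1 / (2 * real M * (1 + z))"
  proof -
    have "2 * (real M + z) \<le> 2 * real M * (1 + z)"
      using mult_left_mono[of 1 "real M" z] M z by (simp add: algebra_simps)
    then show ?thesis using M z by (simp add: frac_le)
  qed
  also have "\<dots> = (1 - 1 / (2 * real M)) * gauss_density z"
    by (simp add: gauss_density_def diff_divide_distrib)
  finally show ?thesis .
qed

definition count_large_digits :: "real \<Rightarrow> nat set \<Rightarrow> nat \<Rightarrow> nat" where
  "count_large_digits x B M = card {i\<in>B. M \<le> cf_digit x i}"

lemma count_large_digits_eq_sum:
  "finite B \<Longrightarrow> count_large_digits x B M = (\<Sum>i\<in>B. if M \<le> cf_digit x i then 1 else 0)"
  unfolding count_large_digits_def card_eq_sum by (subst sum.inter_filter) auto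

lemma sets_few_large_digits:
  assumes "finite B"
  shows "{x\<in>{0<..<1}. count_large_digits x B M < m} \<in> sets lborel"
proof -
  have "real (count_large_digits x B M) = (\<Sum>i\<in>B. if M \<le> cf_digit x i then 1 else 0)" for x
    unfolding count_large_digits_def real_of_card using assms by (subst sum.inter_filter) auto
  then have "{x\<in>{0<..<1}. count_large_digits x B M < m}
      = {x\<in>{0<..<1}. (\<Sum>i\<in>B. if M \<le> cf_digit x i then 1 else 0) < real m}"
    by (metis (no_types, lifting) of_nat_less_iff)
  also have "\<dots> \<in> sets lborel" by measurable
  finally show ?thesis .
qed

lemma prod_halve_large_digits:
  assumes "B \<subseteq> {1..N}"
  shows "(\<Prod>i\<in>{1..N}. if i \<in> B \<and> M \<le> cf_digit x i then 1/2 else 1::real)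
       = (1/2) ^ count_large_digits x B M"
proof -
  have "(\<Prod>i\<in>{1..N}. if i \<in> B \<and> M \<le> cf_digit x i then 1/2 else 1::real)
      = (\<Prod>i\<in>{i\<in>{1..N}. i \<in> B \<and> M \<le> cf_digit x i}. 1/2)"
    by (subst prod.inter_filter) auto
  also have "{i\<in>{1..N}. i \<in> B \<and> M \<le> cf_digit x i} = {i\<in>B. M \<le> cf_digit x i}"
    using assms by auto
  finally show ?thesis by (simp add: count_large_digits_def)
qed

lemma few_large_digits_density_bound:
  assumes "0 < x" "x < 1" "count_large_digits x B M < m"
  shows "1 \<le> 2 * 2^m * (gauss_density x * (1/2) ^ count_large_digits x B M)"
proof -
  have density: "1/2 \<le> gauss_density x" using assms by (simp add: gauss_density_def field_simps)
  have "(2::real) ^ count_large_digits x B M \<le> 2 ^ m"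
    using assms(3) by (intro power_increasing) auto
  then have "(1::real) \<le> 2 ^ m * (1/2) ^ count_large_digits x B M"
    by (simp add: power_one_over field_simps)
  also have "\<dots> \<le> 2 * 2 ^ m * (gauss_density x * (1/2) ^ count_large_digits x B M)"
    using density by (simp add: mult_le_cancel_left1 field_simps)
  finally show ?thesis .
qed

text \<open>Exponential Markov inequality, with the weight \<open>1/2\<close> on every large digit of \<open>B\<close>.\<close>
lemma emeasure_few_large_digits_le:
  assumes B: "B \<subseteq> {1..N}" and M: "1 \<le> M"
  shows "emeasure lborel {x\<in>{0<..<1}. count_large_digits x B M < m}
     \<le> ennreal (2 * 2^m * (1 - 1 / (2 * real M)) ^ card B)"
proof -
  define U where "U i k = (if i \<in> B \<and> M \<le> k then 1/2 else (1::real))" for i k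
  define c where "c i = (if i \<in> B then 1 - 1 / (2 * real M) else (1::real))" for i
  define S where "S = {x\<in>{0<..<1}. count_large_digits x B M < m}"
  have S_sets [measurable]: "S \<in> sets lborel"
    unfolding S_def using B by (intro sets_few_large_digits) (rule finite_subset, auto)
  have integral: "(\<integral>\<^sup>+x. indicator {0<..<1} x * ennreal (gauss_density x * (\<Prod>i\<in>{1..N}. U i (cf_digit x i))) \<partial>lborel)
      \<le> ennreal (\<Prod>i\<in>{1..N}. c i)"
  proof (rule nn_integral_digit_product_le)
    show "0 \<le> U i k" "U i k \<le> 1" for i k by (auto simp: U_def)
    show "0 \<le> c i" for i using M by (auto simp: c_def field_simps)
    show "(\<Sum>k. U i (Suc k) * gauss_branch_weight (real (Suc k) + z)) \<le> c i * gauss_density z"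
      if "0 \<le> z" "z \<le> 1" for i z
      using suminf_halve_tail_branch_weight_le[OF M that] gauss_branch_weight_suminf[OF that(1)]
      by (cases "i \<in> B") (simp_all add: U_def c_def)
  qed
  have "(\<Prod>i\<in>{1..N}. c i) = (\<Prod>i\<in>{i\<in>{1..N}. i \<in> B}. 1 - 1 / (2 * real M))"
    unfolding c_def by (subst prod.inter_filter) auto
  also have "{i\<in>{1..N}. i \<in> B} = B" using B by auto
  finally have prod_c: "(\<Prod>i\<in>{1..N}. c i) = (1 - 1 / (2 * real M)) ^ card B" by simp
  have pointwise: "indicator S x \<le> ennreal (2 * 2^m)
      * (indicator {0<..<1} x * ennreal (gauss_density x * (\<Prod>i\<in>{1..N}. U i (cf_digit x i))))" for x
  proof (cases "x \<in> S")
    case True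
    then have x: "0 < x" "x < 1" and few: "count_large_digits x B M < m" unfolding S_def by auto
    have prod_U: "(\<Prod>i\<in>{1..N}. U i (cf_digit x i)) = (1/2) ^ count_large_digits x B M"
      unfolding U_def using prod_halve_large_digits[OF B] by simp
    have "0 \<le> gauss_density x" using x by (simp add: gauss_density_def)
    then have "ennreal 1 \<le> ennreal (2 * 2^m) * ennreal (gauss_density x * (1/2) ^ count_large_digits x B M)"
      using few_large_digits_density_bound[OF x few] by (simp add: ennreal_mult[symmetric] ennreal_leI)
    then show ?thesis using True x unfolding prod_U by simp
  qed simp
  have "emeasure lborel S = (\<integral>\<^sup>+x. indicator S x \<partial>lborel)" using S_sets by simp
  also have "\<dots> \<le> (\<integral>\<^sup>+x. ennreal (2 * 2^m)
      * (indicator {0<..<1} x * ennreal (gauss_density x * (\<Prod>i\<in>{1..N}. U i (cf_digit x i)))) \<partial>lborel)"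
    by (rule nn_integral_mono) (rule pointwise)
  also have "\<dots> = ennreal (2 * 2^m) * (\<integral>\<^sup>+x. indicator {0<..<1} x
      * ennreal (gauss_density x * (\<Prod>i\<in>{1..N}. U i (cf_digit x i))) \<partial>lborel)"
    by (rule nn_integral_cmult) (unfold U_def, measurable)
  also have "\<dots> \<le> ennreal (2 * 2^m) * ennreal ((1 - 1 / (2 * real M)) ^ card B)"
    using integral prod_c by (intro mult_left_mono) auto
  also have "\<dots> = ennreal (2 * 2^m * (1 - 1 / (2 * real M)) ^ card B)"
    using M by (simp add: ennreal_mult[symmetric] field_simps)
  finally show ?thesis unfolding S_def .
qed

section \<open>Dyadic blocks and Borel-Cantelli\<close>

text \<open>At scale \<open>j\<close> both the number \<open>2^r\<close> of blocks and the thresholds \<open>2^s\<close> are limited by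
  \<open>j/8\<close>, so that every Chernoff exponent \<open>2^(j-r-s-3)\<close> is at least \<open>2^(3j/4-2)\<close>.\<close>
definition depth :: "nat \<Rightarrow> nat" where
  "depth j = j div 8"

definition digit_block :: "nat \<Rightarrow> nat \<Rightarrow> nat set" where
  "digit_block l t = {t * l + 1..t * l + l}"

definition sparse_block :: "nat \<Rightarrow> nat \<Rightarrow> nat \<Rightarrow> nat \<Rightarrow> real set" where
  "sparse_block j r t s =
     {x\<in>{0<..<1}. count_large_digits x (digit_block (2^(j-r)) t) (2^s) < 2^(j-r) div 2^(s+3)}"

definition sparse_indices :: "nat \<Rightarrow> (nat \<times> nat \<times> nat) set" where
  "sparse_indices j = {(r, t, s). r < depth j \<and> t < 2^r \<and> s \<in> {1..depth j}}"

definition exceptional_set :: "nat \<Rightarrow> real set" where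
  "exceptional_set j = (\<Union>(r, t, s)\<in>sparse_indices j. sparse_block j r t s)"

lemma digit_block_subset: "t < k \<Longrightarrow> digit_block l t \<subseteq> {1..k * l}"
proof -
  assume "t < k"
  then have "t * l + l \<le> k * l" by (metis Suc_leI add.commute mult_Suc mult_le_mono1)
  then show ?thesis unfolding digit_block_def by auto
qed

lemma digit_block_disjoint: "t \<noteq> t' \<Longrightarrow> digit_block l t \<inter> digit_block l t' = {}"
proof -
  have *: "digit_block l t \<inter> digit_block l t' = {}" if "t < t'" for t t'
  proof -
    have "t * l + l \<le> t' * l" using that by (metis Suc_leI add.commute mult_Suc mult_le_mono1)
    then show ?thesis unfolding digit_block_def by auto
  qed
  assume "t \<noteq> t'"
  then show ?thesis using *[of t t'] *[of t' t] by (cases "t < t'") (auto simp: Int_commute)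
qed

lemma sets_sparse_block [measurable]: "sparse_block j r t s \<in> sets lborel"
  unfolding sparse_block_def by (rule sets_few_large_digits) (simp add: digit_block_def)

lemma one_minus_power_le_exp:
  assumes "1 \<le> M"
  shows "(1 - 1 / (2 * real M)) ^ l \<le> exp (- (real l / (2 * real M)))"
proof -
  have "(1 - 1 / (2 * real M)) ^ l \<le> exp (- (1 / (2 * real M))) ^ l"
    using assms by (intro power_mono exp_minus_ge) (auto simp: field_simps)
  also have "\<dots> = exp (real l * (- (1 / (2 * real M))))" by (simp only: exp_of_nat_mult)
  finally show ?thesis by simp
qed

lemma emeasure_sparse_block_le:
  assumes "s + 3 \<le> j - r"
  shows "emeasure lborel (sparse_block j r t s) \<le> ennreal (2 * exp (- real (2^(j-r-s-3))))"
proof -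
  define l where "l = (2::nat)^(j-r)"
  define m where "m = (2::nat)^(j-r-s-3)"
  define M :: nat where "M = 2^s"
  have M1: "1 \<le> M" unfolding M_def by (simp add: Suc_le_eq)
  have l: "l = m * 2^(s+3)" unfolding l_def m_def using assms by (simp flip: power_add)
  have "emeasure lborel (sparse_block j r t s) \<le> ennreal (2 * 2^m * (1 - 1 / (2 * real M)) ^ l)"
    unfolding sparse_block_def l_def[symmetric] M_def[symmetric]
    using emeasure_few_large_digits_le[of "digit_block l t" "t * l + l" M m] M1 l
    by (simp add: digit_block_def)
  also have "\<dots> \<le> ennreal (2 * exp (- real m))"
  proof (rule ennreal_leI)
    have "(1 - 1 / (2 * real M)) ^ l \<le> exp (- (real l / (2 * real M)))"
      by (rule one_minus_power_le_exp) (simp add: M_def)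
    also have "real l / (2 * real M) = 4 * real m"
      unfolding l M_def by (simp add: power_add field_simps)
    finally have chernoff: "(1 - 1 / (2 * real M)) ^ l \<le> exp (- (4 * real m))" .
    have "(2::real) ^ m = exp (real m * ln 2)" by (simp add: exp_of_nat_mult)
    also have "\<dots> \<le> exp (real m)" using ln_2_less_1 by (simp add: mult_left_le)
    finally have "(2::real) ^ m \<le> exp (real m)" .
    moreover have "0 \<le> (1 - 1 / (2 * real M)) ^ l" using M1 by simp
    ultimately have "2 * 2^m * (1 - 1 / (2 * real M)) ^ l \<le> 2 * exp (real m) * exp (- (4 * real m))"
      using chernoff by (intro mult_mono) auto
    also have "\<dots> \<le> 2 * exp (- real m)" by (simp add: mult.assoc flip: exp_add)
    finally show "2 * 2^m * (1 - 1 / (2 * real M)) ^ l \<le> 2 * exp (- real m)" .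
  qed
  finally show ?thesis unfolding m_def .
qed

lemma sparse_indices_subset:
  "sparse_indices j \<subseteq> {..<depth j} \<times> {..<(2::nat)^depth j} \<times> {1..depth j}"
proof -
  have "t < 2^depth j" if "r < depth j" "t < 2^r" for r t :: nat
    using that by (meson order.strict_trans2 power_increasing_iff one_less_numeral_iff
        semiring_norm(76) less_imp_le)
  then show ?thesis unfolding sparse_indices_def by auto
qed

lemma finite_sparse_indices: "finite (sparse_indices j)"
  using sparse_indices_subset by (rule finite_subset) auto

lemma card_sparse_indices_le: "card (sparse_indices j) \<le> depth j * 2^depth j * depth j"
proof -
  have "card (sparse_indices j) \<le> card ({..<depth j} \<times> {..<(2::nat)^depth j} \<times> {1..depth j})"
    by (rule card_mono[OF _ sparse_indices_subset]) simp
  then show ?thesis by (simp add: card_cartesian_product)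
qed

lemma sets_exceptional_set [measurable]: "exceptional_set j \<in> sets lborel"
  unfolding exceptional_set_def
  by (rule sets.finite_UN[OF finite_sparse_indices]) (use sets_sparse_block in \<open>auto simp: case_prod_beta\<close>)

lemma emeasure_exceptional_set_le:
  assumes "2 * depth j + 3 \<le> j"
  shows "emeasure lborel (exceptional_set j)
     \<le> ennreal (real (depth j * 2^depth j * depth j) * (2 * exp (- real ((2::nat)^(j - 2 * depth j - 2)))))"
proof -
  define \<mu> where "\<mu> = real ((2::nat)^(j - 2 * depth j - 2))"
  define A where "A = (\<lambda>(r, t, s). sparse_block j r t s)"
  have each: "emeasure lborel (A i) \<le> ennreal (2 * exp (- \<mu>))" if "i \<in> sparse_indices j" for i
  proof -
    obtain r t s where i: "i = (r, t, s)" by (cases i)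
    with that have rs: "r < depth j" "1 \<le> s" "s \<le> depth j" by (auto simp: sparse_indices_def)
    then have "s + 3 \<le> j - r" using assms by linarith
    moreover have "\<mu> \<le> real ((2::nat)^(j-r-s-3))"
      unfolding \<mu>_def using rs assms by (simp add: power_increasing)
    ultimately show ?thesis
      unfolding i A_def using emeasure_sparse_block_le[of s j r t]
      by (auto intro: order.trans ennreal_leI)
  qed
  have "emeasure lborel (exceptional_set j) = emeasure lborel (\<Union>i\<in>sparse_indices j. A i)"
    unfolding exceptional_set_def A_def by simp
  also have "\<dots> \<le> (\<Sum>i\<in>sparse_indices j. emeasure lborel (A i))"
    by (rule emeasure_subadditive_finite[OF finite_sparse_indices]) (use sets_sparse_block in \<open>auto simp: A_def\<close>)
  also have "\<dots> \<le> (\<Sum>i\<in>sparse_indices j. ennreal (2 * exp (- \<mu>)))"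
    by (rule sum_mono) (rule each)
  also have "\<dots> = of_nat (card (sparse_indices j)) * ennreal (2 * exp (- \<mu>))" by simp
  also have "\<dots> \<le> of_nat (depth j * 2^depth j * depth j) * ennreal (2 * exp (- \<mu>))"
    by (rule mult_right_mono, subst of_nat_le_iff, rule card_sparse_indices_le, simp)
  also have "\<dots> = ennreal (real (depth j * 2^depth j * depth j) * (2 * exp (- \<mu>)))"
    by (simp add: ennreal_mult ennreal_of_nat_eq_real_of_nat)
  finally show ?thesis unfolding \<mu>_def .
qed

lemma eventually_measure_exceptional_set_le:
  "eventually (\<lambda>j. measure lborel (exceptional_set j) \<le> (1/2) ^ j) sequentially"
proof -
  have "eventually (\<lambda>j::nat. real j ^ 2 * 2 ^ j * (2 * exp (- (2 powr (3 * real j / 4 - 2)))) \<le> (1/2) ^ j)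
          sequentially"
    by real_asymp
  then show ?thesis using eventually_ge_at_top[of 4]
  proof eventually_elim
    case (elim j)
    define D where "D = depth j"
    have D8: "8 * D \<le> j" unfolding D_def depth_def by simp
    define X where "X = real (D * 2^D * D) * (2 * exp (- real ((2::nat)^(j - 2 * D - 2))))"
    have "emeasure lborel (exceptional_set j) \<le> ennreal X"
      using emeasure_exceptional_set_le[of j] D8 elim(2) unfolding X_def D_def by simp
    then have "measure lborel (exceptional_set j) \<le> X" unfolding measure_def
      by (rule enn2real_leI[rotated]) (simp add: X_def)
    also have "X \<le> real j ^ 2 * 2 ^ j * (2 * exp (- (2 powr (3 * real j / 4 - 2))))"
    proof -
      have "D * 2^D * D \<le> j * 2^j * j"
        using D8 by (intro mult_mono power_increasing) auto
      then have "real (D * 2^D * D) \<le> real (j * 2^j * j)" by (simp only: of_nat_le_iff)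
      then have count: "real (D * 2^D * D) \<le> real j ^ 2 * 2 ^ j"
        by (simp add: power2_eq_square mult_ac)
      have "2 powr (3 * real j / 4 - 2) \<le> 2 powr real (j - 2 * D - 2)"
        using D8 by (intro powr_mono) linarith+
      then have "exp (- real ((2::nat)^(j - 2 * D - 2))) \<le> exp (- (2 powr (3 * real j / 4 - 2)))"
        by (simp add: powr_realpow)
      with count show ?thesis unfolding X_def by (intro mult_mono) auto
    qed
    also have "\<dots> \<le> (1/2) ^ j" using elim(1) .
    finally show ?case .
  qed
qed

lemma AE_eventually_not_exceptional:
  "AE x in lborel. eventually (\<lambda>j. x \<notin> exceptional_set j) sequentially"
proof -
  have "emeasure lborel (exceptional_set j) \<le> emeasure lborel {0<..<(1::real)}" for j
    by (rule emeasure_mono) (auto simp: exceptional_set_def sparse_block_def)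
  then have finite: "emeasure lborel (exceptional_set j) < \<infinity>" for j
    by (rule le_less_trans) simp
  have "summable (\<lambda>j. measure lborel (exceptional_set j))"
    by (rule summable_comparison_test_ev[OF _ summable_geometric[of "1/2"]])
       (use eventually_measure_exceptional_set_le in auto)
  from borel_cantelli_AE1[OF sets_exceptional_set finite this]
  show ?thesis by (rule AE_mp) (intro AE_I2 impI, auto elim: eventually_mono)
qed

section \<open>Lower bounds for the symmetric means\<close>

lemma sum_dyadic_thresholds_le:
  "(\<Sum>s\<in>{1..D}. 2^(s-1) * (if 2^s \<le> a then 1 else 0)) \<le> (a::nat)"
proof -
  have "(\<Sum>s\<in>{1..D}. 2^(s-1) * (if 2^s \<le> a then 1 else 0)) \<le> a \<and>
        (\<Sum>s\<in>{1..D}. 2^(s-1) * (if 2^s \<le> a then 1 else 0)) < (2::nat)^D"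
  proof (induction D)
    case (Suc D)
    have "(\<Sum>s\<in>{1..Suc D}. 2^(s-1) * (if 2^s \<le> a then 1 else 0))
        = (\<Sum>s\<in>{1..D}. 2^(s-1) * (if 2^s \<le> a then 1 else 0)) + 2^D * (if 2^Suc D \<le> a then 1 else (0::nat))"
      by simp
    with Suc.IH show ?case by (cases "2^Suc D \<le> a") (auto intro: less_le_trans)
  qed simp
  then show ?thesis ..
qed

lemma digit_block_sum_ge:
  assumes x: "x \<in> {0<..<1}" "x \<notin> exceptional_set j" and j: "2 * depth j + 3 \<le> j"
    and r: "r < depth j" and t: "t < 2^r"
  shows "depth j * 2^(j-r-4) \<le> (\<Sum>i\<in>digit_block (2^(j-r)) t. cf_digit x i)"
proof -
  define B where "B = digit_block (2^(j-r)) t"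
  have B: "finite B" by (simp add: B_def digit_block_def)
  have many: "2^(j-r-4) \<le> 2^(s-1) * count_large_digits x B (2^s)" if s: "s \<in> {1..depth j}" for s
  proof -
    have "(r, t, s) \<in> sparse_indices j" using r t s by (simp add: sparse_indices_def)
    then have "x \<notin> sparse_block j r t s" using x(2) unfolding exceptional_set_def by blast
    then have count: "2^(j-r) div 2^(s+3) \<le> count_large_digits x B (2^s)"
      using x(1) unfolding sparse_block_def B_def by auto
    have sj: "s + 3 \<le> j - r" using s r j by auto
    then have "(2::nat)^(j-r) = 2^(j-r-s-3) * 2^(s+3)" by (simp flip: power_add)
    with count have "2^(j-r-s-3) \<le> count_large_digits x B (2^s)" by simp
    moreover have "(2::nat)^(j-r-4) = 2^(s-1) * 2^(j-r-s-3)"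
      using sj s by (simp flip: power_add)
    ultimately show ?thesis by simp
  qed
  have "depth j * 2^(j-r-4) = (\<Sum>s\<in>{1..depth j}. 2^(j-r-4::nat))" by simp
  also have "\<dots> \<le> (\<Sum>s\<in>{1..depth j}. 2^(s-1) * count_large_digits x B (2^s))"
    by (rule sum_mono) (rule many)
  also have "\<dots> = (\<Sum>s\<in>{1..depth j}. \<Sum>i\<in>B. 2^(s-1) * (if 2^s \<le> cf_digit x i then 1 else 0))"
    by (simp add: count_large_digits_eq_sum[OF B] sum_distrib_left)
  also have "\<dots> = (\<Sum>i\<in>B. \<Sum>s\<in>{1..depth j}. 2^(s-1) * (if 2^s \<le> cf_digit x i then 1 else 0))"
    by (rule sum.swap)
  also have "\<dots> \<le> (\<Sum>i\<in>B. cf_digit x i)"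
    by (rule sum_mono) (rule sum_dyadic_thresholds_le)
  finally show ?thesis unfolding B_def .
qed

text \<open>Expanding the product picks one index from each block; distinct choices give distinct
  \<open>k\<close>-subsets of \<open>{1..n}\<close> because the blocks are disjoint.\<close>
lemma prod_sum_disjoint_le_elementary_symmetric:
  fixes a :: "nat \<Rightarrow> real" and B :: "nat \<Rightarrow> nat set"
  assumes a: "\<And>i. 0 \<le> a i" and B: "\<And>t. t < k \<Longrightarrow> B t \<subseteq> {1..n}"
    and disjoint: "\<And>t t'. t < k \<Longrightarrow> t' < k \<Longrightarrow> t \<noteq> t' \<Longrightarrow> B t \<inter> B t' = {}"
  shows "(\<Prod>t<k. \<Sum>i\<in>B t. a i) \<le> (\<Sum>I\<in>{I. I \<subseteq> {1..n} \<and> card I = k}. \<Prod>i\<in>I. a i)"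
proof -
  define P where "P = PiE {..<k} B"
  have finite_B: "finite (B t)" if "t < k" for t using B[OF that] finite_subset by blast
  have choice_eq: "t = t'" if "g \<in> P" "h \<in> P" "t < k" "t' < k" "g t = h t'" for g h t t'
  proof (rule ccontr)
    assume "t \<noteq> t'"
    then have "B t \<inter> B t' = {}" using disjoint that by auto
    moreover have "g t \<in> B t" "h t' \<in> B t'" using that(1-4) unfolding P_def by (auto simp: PiE_iff)
    ultimately show False using that by auto
  qed
  have inj: "inj_on g {..<k}" if "g \<in> P" for g
    by (rule inj_onI) (use choice_eq[OF that that] in auto)
  have inj_image: "inj_on (\<lambda>g. g ` {..<k}) P"
  proof (rule inj_onI)
    fix g h assume g: "g \<in> P" and h: "h \<in> P" and eq: "g ` {..<k} = h ` {..<k}"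
    show "g = h"
    proof (rule PiE_ext[OF g[unfolded P_def] h[unfolded P_def]])
      fix t assume t: "t \<in> {..<k}"
      then have "g t \<in> h ` {..<k}" using eq by blast
      then obtain t' where t': "t' < k" "g t = h t'" by auto
      then show "g t = h t" using choice_eq[OF g h _ t'(1)] t by auto
    qed
  qed
  have "(\<Prod>t<k. \<Sum>i\<in>B t. a i) = (\<Sum>g\<in>P. \<Prod>t<k. a (g t))"
    unfolding P_def by (rule prod_sum_PiE) (auto intro: finite_B)
  also have "\<dots> = (\<Sum>g\<in>P. \<Prod>i\<in>g ` {..<k}. a i)"
    by (rule sum.cong[OF refl]) (simp add: prod.reindex[OF inj])
  also have "\<dots> = (\<Sum>I\<in>(\<lambda>g. g ` {..<k}) ` P. \<Prod>i\<in>I. a i)"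
    by (rule sum.reindex[OF inj_image, symmetric, unfolded comp_def])
  also have "\<dots> \<le> (\<Sum>I\<in>{I. I \<subseteq> {1..n} \<and> card I = k}. \<Prod>i\<in>I. a i)"
  proof (rule sum_mono2)
    show "finite {I. I \<subseteq> {1..n} \<and> card I = k}"
      by (rule finite_subset[of _ "Pow {1..n}"]) auto
    show "(\<lambda>g. g ` {..<k}) ` P \<subseteq> {I. I \<subseteq> {1..n} \<and> card I = k}"
      using B card_image[OF inj] unfolding P_def by (fastforce simp: PiE_iff)
    show "0 \<le> (\<Prod>i\<in>I. a i)" for I using a by (simp add: prod_nonneg)
  qed
  finally show ?thesis .
qed

lemma power_div_exp_le_fact: "(real k / exp 1) ^ k \<le> fact k"
proof -
  have "(\<lambda>n. real k ^ n /\<^sub>R fact n) sums exp (real k)" by (rule exp_converges)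
  then have "real k ^ k /\<^sub>R fact k \<le> exp (real k)"
    using sum_le_suminf[OF sums_summable, of _ _ "{k}"] sums_unique by fastforce
  then have "real k ^ k / fact k \<le> exp (real k)" by (simp add: divide_inverse mult.commute)
  then have "real k ^ k \<le> exp 1 ^ k * fact k"
    by (simp add: divide_le_eq flip: exp_of_nat_mult)
  then show ?thesis by (simp add: power_divide divide_le_eq mult.commute)
qed

lemma binomial_le_power_div_fact: "real (n choose k) \<le> real n ^ k / fact k"
proof -
  have "(n choose k) * fact k \<le> n ^ k" by (rule binomial_fact_pow)
  then have "real (n choose k) * fact k \<le> real n ^ k"
    by (metis of_nat_fact of_nat_le_iff of_nat_mult of_nat_power)
  then show ?thesis by (simp add: le_divide_eq)
qed

lemma sym_mean_ge_disjoint_blocks: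
  fixes B :: "nat \<Rightarrow> nat set"
  assumes k: "1 \<le> k" "k \<le> n" and Y: "0 \<le> Y"
    and B: "\<And>t. t < k \<Longrightarrow> B t \<subseteq> {1..n}"
    and disjoint: "\<And>t t'. t < k \<Longrightarrow> t' < k \<Longrightarrow> t \<noteq> t' \<Longrightarrow> B t \<inter> B t' = {}"
    and block_sums: "\<And>t. t < k \<Longrightarrow> Y \<le> (\<Sum>i\<in>B t. real (cf_digit x i))"
  shows "(Y * real k / (exp 1 * real n)) ^ k \<le> sym_mean x n k"
proof -
  have n: "0 < real n" using k by simp
  have C: "0 < real (n choose k)" using k by simp
  have "Y ^ k = (\<Prod>t<k. Y)" by simp
  also have "\<dots> \<le> (\<Prod>t<k. \<Sum>i\<in>B t. real (cf_digit x i))"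
    by (rule prod_mono) (use Y block_sums in auto)
  also have "\<dots> \<le> (\<Sum>I\<in>{I. I \<subseteq> {1..n} \<and> card I = k}. \<Prod>i\<in>I. real (cf_digit x i))"
    by (rule prod_sum_disjoint_le_elementary_symmetric) (use B disjoint in auto)
  finally have Y_le: "Y ^ k \<le> sym_mean x n k * real (n choose k)"
    using C by (simp add: sym_mean_def)
  have "(Y * real k / (exp 1 * real n)) ^ k = (Y / real n) ^ k * (real k / exp 1) ^ k"
    by (simp add: power_mult_distrib[symmetric] mult_ac)
  also have "\<dots> \<le> (Y / real n) ^ k * fact k"
    using power_div_exp_le_fact Y n by (intro mult_left_mono) auto
  also have "\<dots> = Y ^ k / (real n ^ k / fact k)"
    by (simp add: power_divide)
  also have "\<dots> \<le> Y ^ k / real (n choose k)"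
    using binomial_le_power_div_fact C Y n by (intro divide_left_mono) auto
  also have "\<dots> \<le> sym_mean x n k"
    using Y_le C by (simp add: divide_le_eq)
  finally show ?thesis .
qed

lemma dyadic_block_ratio_ge:
  assumes "r + 4 \<le> j" "2^r < 2 * k" "0 < n" "n < 2^(j+1)"
  shows "real D / 192 \<le> real (D * 2^(j-r-4)) * real k / (exp 1 * real n)"
proof -
  define P where "P = (2::real)^(j-4)"
  have "(2::real)^(j-r-4) * 2^r = P" unfolding P_def using assms(1) by (simp flip: power_add)
  moreover have "(2::real)^r \<le> 2 * real k"
    using assms(2) by (metis less_imp_le of_nat_le_iff of_nat_mult of_nat_numeral of_nat_power)
  ultimately have blocks: "real D * P \<le> 2 * (real (D * 2^(j-r-4)) * real k)"
    using mult_left_mono[of "2^r" "2 * real k" "real D * 2^(j-r-4)"] by (simp add: mult_ac)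
  have "j + 1 = (j - 4) + 5" using assms(1) by simp
  then have "(2::real)^(j+1) = 2^(j-4) * 2^5" by (simp only: power_add)
  then have "(2::real)^(j+1) = 32 * P" unfolding P_def by simp
  moreover have "real n \<le> 2^(j+1)"
    using assms(4) by (metis less_imp_le of_nat_le_iff of_nat_numeral of_nat_power)
  ultimately have "exp 1 * real n \<le> 3 * (32 * P)" using exp_le by (intro mult_mono) auto
  then have "real D * (exp 1 * real n) \<le> 192 * (real (D * 2^(j-r-4)) * real k)"
    using blocks mult_left_mono[of "exp 1 * real n" "3 * (32 * P)" "real D"] by simp
  moreover have "0 < exp 1 * real n" using assms(3) by simp
  ultimately show ?thesis by (simp add: divide_le_eq le_divide_eq mult_ac)
qed

text \<open>The blocks have length \<open>2^(j-r)\<close> with \<open>k \<le> 2^r < 2k\<close>, so \<open>k\<close> of them fit into \<open>[1, 2^j]\<close>.\<close>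
lemma sym_mean_ge_depth:
  assumes x: "x \<in> {0<..<1}" "x \<notin> exceptional_set j" and j: "4 \<le> j"
    and k: "1 \<le> k" "2 * k < 2 ^ depth j" and n: "2^j \<le> n" "n < 2^(j+1)"
  shows "(real (depth j) / 192) ^ k \<le> sym_mean x n k"
proof -
  define D where "D = depth j"
  define r where "r = ceillog2 k"
  define l where "l = (2::nat)^(j-r)"
  define Y where "Y = real (D * 2^(j-r-4))"
  have kr: "k \<le> 2^r" unfolding r_def by (rule le_two_power_ceillog2)
  have rk: "2^r < 2 * k" unfolding r_def using k by (intro two_power_ceillog2_gt) simp
  have "(2::nat)^r < 2^D" using rk k unfolding D_def by linarith
  then have rD: "r < D" by (rule power_less_imp_less_exp[rotated]) simp
  have jD: "2 * D + 3 \<le> j" using j unfolding D_def depth_def by linarith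
  then have rj: "r + 4 \<le> j" using rD by linarith
  have "k * l \<le> 2^r * 2^(j-r)" unfolding l_def using kr by simp
  also have "\<dots> = 2^j" using rj by (simp flip: power_add)
  finally have kl: "k * l \<le> n" using n by simp
  have "k \<le> k * l" by (simp add: l_def)
  with kl have kn: "k \<le> n" by linarith
  have "(Y * real k / (exp 1 * real n)) ^ k \<le> sym_mean x n k"
  proof (rule sym_mean_ge_disjoint_blocks[where B = "digit_block l"])
    show "digit_block l t \<subseteq> {1..n}" if "t < k" for t
      using digit_block_subset[OF that, of l] kl by auto
    show "Y \<le> (\<Sum>i\<in>digit_block l t. real (cf_digit x i))" if "t < k" for t
    proof -
      have "D * 2^(j-r-4) \<le> (\<Sum>i\<in>digit_block l t. cf_digit x i)"
        using digit_block_sum_ge[OF x jD[unfolded D_def], of r t] that kr rD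
        unfolding D_def l_def by simp
      then show ?thesis unfolding Y_def by (metis of_nat_le_iff of_nat_sum)
    qed
  qed (use k kn digit_block_disjoint in \<open>auto simp: Y_def\<close>)
  moreover have "real D / 192 \<le> Y * real k / (exp 1 * real n)"
    unfolding Y_def using rj rk n by (intro dyadic_block_ratio_ge) auto
  ultimately show ?thesis unfolding D_def
    by (meson order.trans power_mono divide_nonneg_nonneg of_nat_0_le_iff zero_le_numeral)
qed

section \<open>Almost sure divergence\<close>

lemma le_powr_inverse_if_power_le:
  fixes a b :: real
  assumes "0 \<le> a" "1 \<le> k" "a ^ k \<le> b"
  shows "a \<le> b powr (1 / real k)"
proof (cases "a = 0")
  case False
  with assms have "a = (a ^ k) powr (1 / real k)"
    by (simp add: powr_realpow[symmetric] powr_powr)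
  also have "\<dots> \<le> b powr (1 / real k)"
    using assms by (intro powr_mono2) auto
  finally show ?thesis .
qed simp

lemma eventually_depth_ge: "eventually (\<lambda>j. Z \<le> real (depth j)) sequentially"
proof -
  have "filterlim (\<lambda>j::nat. real j / 8 - 1) at_top sequentially" by real_asymp
  then have "eventually (\<lambda>j::nat. Z \<le> real j / 8 - 1) sequentially" by (simp add: filterlim_at_top)
  then show ?thesis
  proof eventually_elim
    case (elim j)
    have "real j / 8 - 1 \<le> real (depth j)" unfolding depth_def by linarith
    with elim show ?case by linarith
  qed
qed

lemma eventually_two_power_depth_gt: "eventually (\<lambda>j. 2 * (real j + 1) < 2 ^ depth j) sequentially"
proof -
  have "eventually (\<lambda>j::nat. 2 * (real j + 1) < 2 powr (real j / 8 - 1)) sequentially" by real_asymp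
  then show ?thesis
  proof eventually_elim
    case (elim j)
    have "real j / 8 - 1 \<le> real (depth j)" unfolding depth_def by linarith
    then have "2 powr (real j / 8 - 1) \<le> 2 ^ depth j" by (simp add: powr_realpow[symmetric])
    with elim show ?case by linarith
  qed
qed

lemma one_le_ln_nat: "3 \<le> n \<Longrightarrow> 1 \<le> ln (real n)"
  using exp_le by (subst ln_ge_iff) auto

lemma ln_ln_less_Suc_exponent:
  assumes "3 \<le> n" "n < 2 ^ (j + 1)"
  shows "ln (ln (real n)) < real j + 1"
proof -
  have "real n < 2 ^ (j + 1)"
    using assms(2) by (metis of_nat_less_iff of_nat_numeral of_nat_power)
  then have n: "ln (real n) < ln (2 ^ (j + 1))" using assms(1) by simp
  have "ln (ln (real n)) \<le> ln (real n) - 1"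
    using one_le_ln_nat[OF assms(1)] by (intro ln_le_minus_one) simp
  also have "\<dots> < ln (2 ^ (j + 1))" using n by simp
  also have "\<dots> = real (j + 1) * ln 2" by (rule ln_realpow)
  also have "\<dots> \<le> real (j + 1)" using ln_2_less_1 by (intro mult_left_le) auto
  finally show ?thesis by simp
qed

lemma sym_mean_root_tendsto_at_top:
  fixes f :: "nat \<Rightarrow> nat"
  assumes x: "x \<in> {0<..<1}" and good: "eventually (\<lambda>j. x \<notin> exceptional_set j) sequentially"
    and f_pos: "\<And>n. 1 \<le> f n"
    and f_le: "eventually (\<lambda>n. real (f n) \<le> ln (ln (real n))) sequentially"
  shows "filterlim (\<lambda>n. sym_mean x n (f n) powr (1 / real (f n))) at_top sequentially"
proof (subst filterlim_at_top, intro allI)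
  fix Z :: real
  have "eventually (\<lambda>j. x \<notin> exceptional_set j \<and> 4 \<le> j \<and> 2 * (real j + 1) < 2 ^ depth j
                         \<and> 192 * Z \<le> real (depth j)) sequentially"
    using good eventually_ge_at_top[of 4] eventually_two_power_depth_gt eventually_depth_ge
    by eventually_elim auto
  then obtain J where J: "\<And>j. J \<le> j \<Longrightarrow> x \<notin> exceptional_set j \<and> 4 \<le> j
                           \<and> 2 * (real j + 1) < 2 ^ depth j \<and> 192 * Z \<le> real (depth j)"
    by (auto simp: eventually_sequentially)
  show "eventually (\<lambda>n. Z \<le> sym_mean x n (f n) powr (1 / real (f n))) sequentially"
    using f_le eventually_ge_at_top[of "max (2^J) 3"]
  proof eventually_elim
    case (elim n)
    define j where "j = floor_log n"
    have n: "2^j \<le> n" "n < 2^(j+1)"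
      using floor_log_exp2_le[of n] floor_log_exp2_gt[of n] elim(2) unfolding j_def by auto
    have "J \<le> j" using floor_log_le_iff[of "2^J" n] elim(2) unfolding j_def by simp
    note scale = J[OF this]
    have "real (f n) < real j + 1"
      using elim ln_ln_less_Suc_exponent[OF _ n(2)] by fastforce
    then have "real (2 * f n) < 2 ^ depth j" using scale by simp
    then have "2 * f n < 2 ^ depth j" by (metis of_nat_less_iff of_nat_numeral of_nat_power)
    then have "(real (depth j) / 192) ^ f n \<le> sym_mean x n (f n)"
      using sym_mean_ge_depth[OF x] scale f_pos n by blast
    then have "real (depth j) / 192 \<le> sym_mean x n (f n) powr (1 / real (f n))"
      by (rule le_powr_inverse_if_power_le[rotated 2]) (use f_pos[of n] in auto)
    then show ?case using scale by linarith
  qed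
qed

theorem theorem1p1:
  fixes f :: "nat \<Rightarrow> nat"
  assumes f_pos: "\<And>n. f n \<ge> 1"
    and f_small: "(\<lambda>n. real (f n)) \<in> o(\<lambda>n. ln (ln (real n)))"
  shows "AE \<alpha> in lborel. \<alpha> \<in> {0<..<1} \<and> \<alpha> \<notin> \<rat> \<longrightarrow>
           filterlim (\<lambda>n. sym_mean \<alpha> n (f n) powr (1 / real (f n))) at_top sequentially"
proof -
  have f_le: "eventually (\<lambda>n. real (f n) \<le> ln (ln (real n))) sequentially"
    using landau_o.smallD[OF f_small zero_less_one] eventually_ge_at_top[of 3]
  proof eventually_elim
    case (elim n)
    then have "0 \<le> ln (ln (real n))" using one_le_ln_nat by simp
    with elim show ?case by simp
  qed
  show ?thesis
    using AE_eventually_not_exceptional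
    by (rule AE_mp) (intro AE_I2 impI, auto intro: sym_mean_root_tendsto_at_top f_pos f_le)
qed

end
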